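(* Let $$A= \begin{pmatrix} 1& -2& 2\\ 2&-1& 2\\ 2&-2& 3 \end{pmatrix},\quad B= \begin{pmatrix} 1& 2& 2\\ 2&1& 2\\ 2&2& 3 \end{pmatrix},\quad C= \begin{pmatrix} -1& 2& 2\\ -2&1& 2\\ -2&2& 3 \end{pmatrix},$$ and let $P=(x,y,z)$ be a primitive Pythagorean triple. Then the points of $\mathbb{R}^3$ with coordinates $AP^\top$, $BP^\top$, $CP^\top$ form a triangle that is not a right triangle (none of its angles equals $\pi/2$).
   Context: A primitive Pythagorean triple is a triple $(x,y,z)$ of positive integers with $x^2+y^2=z^2$, $\gcd(x,y)=1$ and $x$ odd. Triples are regarded as row vectors and $\top$ denotes transpose; $\mathbb{R}^3$ carries the Euclidean metric. *)

theory Defs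
  imports "HOL-Analysis.Analysis"
begin

definition primitive_pythagorean_triple :: "int \<Rightarrow> int \<Rightarrow> int \<Rightarrow> bool" where
  "primitive_pythagorean_triple x y z \<longleftrightarrow>
     x > 0 \<and> y > 0 \<and> z > 0 \<and> x\<^sup>2 + y\<^sup>2 = z\<^sup>2 \<and> gcd x y = 1 \<and> odd x"

definition vangle :: "'a::real_inner \<Rightarrow> 'a \<Rightarrow> real" where
  "vangle u v = arccos ((u \<bullet> v) / (norm u * norm v))"

definition is_triangle :: "'a::real_inner \<Rightarrow> 'a \<Rightarrow> 'a \<Rightarrow> bool" where
  "is_triangle a b c \<longleftrightarrow> \<not> collinear {a, b, c}"

definition is_right_triangle :: "'a::real_inner \<Rightarrow> 'a \<Rightarrow> 'a \<Rightarrow> bool" where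
  "is_right_triangle a b c \<longleftrightarrow>
     vangle (b - a) (c - a) = pi/2 \<or> vangle (a - b) (c - b) = pi/2 \<or> vangle (a - c) (b - c) = pi/2"

definition matA :: "real^3^3" where
  "matA = vector [vector [1, -2, 2], vector [2, -1, 2], vector [2, -2, 3]]"
definition matB :: "real^3^3" where
  "matB = vector [vector [1, 2, 2], vector [2, 1, 2], vector [2, 2, 3]]"
definition matC :: "real^3^3" where
  "matC = vector [vector [-1, 2, 2], vector [-2, 1, 2], vector [-2, 2, 3]]"

end

theory Submission
  imports Defs
begin

text \<open>The vertices are A P, B P and C P, and the edge vectors do not depend on z:
  B P - A P = 2y (2,1,2) and C P - B P = -2x (1,2,2). Since (2,1,2) and (1,2,2) have squared
  length 9 and inner product 8, the three angles are right exactly when 32xy, 9y - 8x or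
  9x - 8y vanishes. The first is impossible because x, y > 0, the last because x is odd, and
  9y = 8x would force (x, y) = (9, 8) by coprimality, but 9^2 + 8^2 = 145 is not a square.\<close>

lemma vangle_eq_pi_half_iff: "vangle u v = pi / 2 \<longleftrightarrow> u \<bullet> v = 0"
proof -
  define t where "t = (u \<bullet> v) / (norm u * norm v)"
  have "\<bar>t\<bar> \<le> 1"
    using Cauchy_Schwarz_ineq2[of u v] by (auto simp: t_def abs_divide divide_le_eq_1)
  then have "vangle u v = pi / 2 \<longleftrightarrow> t = 0"
    using arccos_eq_iff[of t 0] by (simp add: vangle_def t_def)
  also have "\<dots> \<longleftrightarrow> u \<bullet> v = 0"
    by (auto simp: t_def)
  finally show ?thesis .
qed

lemma is_right_triangle_iff_inner:
  "is_right_triangle a b c \<longleftrightarrow>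
     (b - a) \<bullet> (c - a) = 0 \<or> (a - b) \<bullet> (c - b) = 0 \<or> (a - c) \<bullet> (b - c) = 0"
  unfolding is_right_triangle_def vangle_eq_pi_half_iff ..

lemma inner_vec3: "(u :: real^3) \<bullet> v = u$1 * v$1 + u$2 * v$2 + u$3 * v$3"
  by (simp add: inner_vec_def sum_3)

lemma matB_minus_matA: "matB *v v - matA *v v = (2 * v$2) *\<^sub>R vector [2, 1, 2]"
  by (simp add: vec_eq_iff forall_3 matA_def matB_def matrix_vector_mult_def sum_3 algebra_simps)

lemma matC_minus_matB: "matC *v v - matB *v v = (- 2 * v$1) *\<^sub>R vector [1, 2, 2]"
  by (simp add: vec_eq_iff forall_3 matB_def matC_def matrix_vector_mult_def sum_3 algebra_simps)

lemma inner_edges_matABC: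
  fixes v :: "real^3"
  defines "a \<equiv> matA *v v" and "b \<equiv> matB *v v" and "c \<equiv> matC *v v"
  shows "(b - a) \<bullet> (c - a) = 4 * v$2 * (9 * v$2 - 8 * v$1)"
    and "(a - b) \<bullet> (c - b) = 32 * v$1 * v$2"
    and "(a - c) \<bullet> (b - c) = 4 * v$1 * (9 * v$1 - 8 * v$2)"
proof -
  have ab: "b - a = (2 * v$2) *\<^sub>R vector [2, 1, 2]"
    and bc: "c - b = (- 2 * v$1) *\<^sub>R vector [1, 2, 2]"
    by (simp_all add: a_def b_def c_def matB_minus_matA matC_minus_matB)
  have edges: "c - a = (b - a) + (c - b)" "a - b = - (b - a)" "a - c = - ((b - a) + (c - b))"
    "b - c = - (c - b)"
    by simp_all
  show "(b - a) \<bullet> (c - a) = 4 * v$2 * (9 * v$2 - 8 * v$1)"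
    and "(a - b) \<bullet> (c - b) = 32 * v$1 * v$2"
    and "(a - c) \<bullet> (b - c) = 4 * v$1 * (9 * v$1 - 8 * v$2)"
    unfolding edges ab bc by (simp_all add: inner_vec3 algebra_simps)
qed

lemma not_collinear_matABC:
  fixes v :: "real^3"
  assumes "v$1 \<noteq> 0" and "v$2 \<noteq> 0"
  shows "\<not> collinear {matA *v v, matB *v v, matC *v v}"
proof
  assume "collinear {matA *v v, matB *v v, matC *v v}"
  then have "collinear {0, - (matB *v v - matA *v v), matC *v v - matB *v v}"
    by (simp add: collinear_3)
  then obtain t :: real
    where "(- 2 * v$1) *\<^sub>R vector [1, 2, 2] = t *\<^sub>R (- (2 * v$2) *\<^sub>R vector [2, 1, 2] :: real^3)"
    using assms by (auto simp: collinear_lemma matB_minus_matA matC_minus_matB vec_eq_iff forall_3)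
  then have "v$1 = 2 * t * v$2" "2 * v$1 = t * v$2"
    by (auto simp: vec_eq_iff forall_3)
  then show False
    using assms by auto
qed

lemma primitive_pythagorean_triple_9x_ne_8y:
  assumes "primitive_pythagorean_triple x y z"
  shows "9 * x \<noteq> 8 * y"
proof
  assume "9 * x = 8 * y"
  then have "even x"
    by presburger
  with assms show False
    by (simp add: primitive_pythagorean_triple_def)
qed

lemma primitive_pythagorean_triple_9y_ne_8x:
  assumes "primitive_pythagorean_triple x y z"
  shows "9 * y \<noteq> 8 * x"
proof
  assume ratio: "9 * y = 8 * x"
  note triple = assms[unfolded primitive_pythagorean_triple_def]
  have "8 dvd y"
    using ratio by presburger
  then obtain k where y: "y = 8 * k" ..
  with ratio have x: "x = 9 * k"
    by simp
  have "k = 1"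
    using triple unfolding x y by auto
  then have "z\<^sup>2 = 145"
    using triple by (simp add: x y)
  moreover have "z \<le> 12 \<or> 13 \<le> z"
    by linarith
  ultimately show False
    using triple power_mono[of z 12 2] power_mono[of 13 z 2] by auto
qed

theorem mainTheorem13:
  fixes x y z :: int
  assumes "primitive_pythagorean_triple x y z"
  defines "P \<equiv> (vector [real_of_int x, real_of_int y, real_of_int z] :: real^3)"
  shows "is_triangle (matA *v P) (matB *v P) (matC *v P) \<and>
         \<not> is_right_triangle (matA *v P) (matB *v P) (matC *v P)"
proof -
  have "x > 0" "y > 0"
    using assms(1) by (auto simp: primitive_pythagorean_triple_def)
  moreover have "real_of_int (9 * x) \<noteq> 8 * y" "real_of_int (9 * y) \<noteq> 8 * x"
    using primitive_pythagorean_triple_9x_ne_8y[OF assms(1)]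
      primitive_pythagorean_triple_9y_ne_8x[OF assms(1)] by linarith+
  ultimately show ?thesis
    by (simp add: P_def is_triangle_def is_right_triangle_iff_inner inner_edges_matABC
        not_collinear_matABC)
qed

end
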